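(* The values of $h$ satisfy $(h(1),h(2),\dots,h(8))=(0,1,1,1,2,2,1,1)$, and for every integer $n>8$: $h(n)=h(n/2)$ if $n\equiv0\pmod 4$; $h(n)=h(n/2)+1$ if $n\equiv 2\pmod 4$; $h(n)=h((n+1)/2)$ if $n\equiv1\pmod 8$; $h(n)=h((n-1)/2)+1$ if $n\equiv 3\pmod 8$; $h(n)=h((n+1)/2)+1$ if $n\equiv5\pmod 8$; $h(n)=h((n-1)/2)$ if $n\equiv 7\pmod 8$.
   Context: For $k\ge0$ and $0\le m<2^k$ let $\beta_k(m)\in\{0,1\}^k$ be the point whose $j$-th coordinate is the binary digit of $m$ of weight $2^{k-j}$. For $n\ge2$ with $k=\lceil\log_2 n\rceil$, a pair $(n_0,n_1)$ of integers with $n=n_0+n_1$, $n_0\ge n_1\ge1$ is a hypercubic bipartition (HCBP) of $n$ if for some $i\in\{1,\dots,k\}$ the hyperplane $x_i=1/2$ splits the points $\beta_k(0),\dots,\beta_k(n-1)$ into $n_0$ points on one side and $n_1$ on the other. For $n\ge2$, $h(n)$ is the number of HCBPs of $n$, and $h(1)=0$. *)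

theory Defs
  imports Complex_Main
begin

definition hc_dim :: "nat \<Rightarrow> nat" where
  "hc_dim n = nat \<lceil>log 2 (real n)\<rceil>"

text \<open>beta_k(m) as a list of length k; entry j-1 is the j-th coordinate,
  the binary digit of m of weight 2^(k-j).\<close>
definition beta :: "nat \<Rightarrow> nat \<Rightarrow> nat list" where
  "beta k m = map (\<lambda>j. (m div 2 ^ (k - j)) mod 2) [1..<k+1]"

definition coord :: "nat \<Rightarrow> nat \<Rightarrow> nat \<Rightarrow> real" where
  "coord k m i = real (beta k m ! (i - 1))"

definition is_hcbp :: "nat \<Rightarrow> nat \<times> nat \<Rightarrow> bool" where
  "is_hcbp n p \<longleftrightarrow> (case p of (n0, n1) \<Rightarrow>
     n = n0 + n1 \<and> n0 \<ge> n1 \<and> n1 \<ge> 1 \<and>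
     (\<exists>i\<in>{1..hc_dim n}.
        let A = {m. m < n \<and> coord (hc_dim n) m i < 1/2};
            B = {m. m < n \<and> coord (hc_dim n) m i > 1/2}
        in (card A = n0 \<and> card B = n1) \<or> (card A = n1 \<and> card B = n0)))"

definition h :: "nat \<Rightarrow> nat" where
  "h n = (if n \<ge> 2 then card {p. is_hcbp n p} else 0)"

end

theory Submission
  imports Defs
begin

text \<open>Reading the coordinates backwards, the hyperplane through coordinate k - j separates the
  points m < n with binary digit j equal to 1 from the others, and there are (n - d_{j+1}(n))/2 of
  the former, where d_i(n) is the distance from n to the nearest multiple of 2^i. Since
  d_1(n) \<le> ... \<le> d_k(n) < d_{k+1}(n) = n, the number h(n) of distinct values among the
  first k of them is the number of indices i at which d_i(n) < d_{i+1}(n). Doubling n doubles the sequence and shifts it by one place, which adds a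
  jump at i = 1 exactly when n/2 is odd. For odd n = 2m + 1 the jumps are the positions where two
  consecutive binary digits of m differ, and removing the last digit of m removes one such
  position exactly when its last two digits differ.\<close>

definition pow2_dist :: "nat \<Rightarrow> nat \<Rightarrow> nat" where
  "pow2_dist i n = min (n mod 2 ^ i) (2 ^ i - n mod 2 ^ i)"

lemma mod_pow2_Suc: "(n::nat) mod 2 ^ Suc i = n mod 2 ^ i + 2 ^ i * of_bool (bit n i)"
  using take_bit_Suc_from_most [of i n] by (simp add: take_bit_eq_mod)

lemma pow2_dist_0 [simp]: "pow2_dist 0 n = 0"
  by (simp add: pow2_dist_def)

lemma pow2_dist_Suc_0: "pow2_dist (Suc 0) n = n mod 2"
  by (auto simp: pow2_dist_def min_def mod2_eq_if)

lemma pow2_dist_mono: "pow2_dist i n \<le> pow2_dist (Suc i) n"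
  using mod_less_divisor [of "2 ^ i" n] unfolding pow2_dist_def mod_pow2_Suc
  by (cases "bit n i") auto

lemma pow2_dist_double: "pow2_dist (Suc i) (2 * m) = 2 * pow2_dist i m"
  using mod_less_divisor [of "2 ^ i" m]
  by (auto simp: pow2_dist_def mod_mult_mult1 min_def)

lemma pow2_dist_eq_self:
  assumes "n \<le> 2 ^ i"
  shows "pow2_dist (Suc i) n = n"
proof -
  have "(0::nat) < 2 ^ i" by simp
  with assms have "n < 2 ^ Suc i"
    unfolding power_Suc by linarith
  with assms show ?thesis
    by (simp add: pow2_dist_def)
qed

lemma pow2_dist_less_Suc_iff:
  "pow2_dist (Suc j) n < pow2_dist (Suc (Suc j)) n \<longleftrightarrow>
     (bit n (Suc j) \<and> \<not> bit n j) \<or> (\<not> bit n (Suc j) \<and> bit n j \<and> n mod 2 ^ j \<noteq> 0)"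
proof -
  define P :: nat where "P = 2 ^ j"
  define r where "r = n mod P"
  have "r < P" by (simp add: r_def P_def)
  have pow: "(2::nat) ^ Suc j = 2 * P" "(2::nat) ^ Suc (Suc j) = 4 * P"
    by (simp_all add: P_def)
  have "n mod 2 ^ Suc j = r + P * of_bool (bit n j)"
    "n mod 2 ^ Suc (Suc j) = r + P * of_bool (bit n j) + 2 * P * of_bool (bit n (Suc j))"
    unfolding mod_pow2_Suc [of n "Suc j"] mod_pow2_Suc [of n j] by (simp_all add: r_def P_def)
  with \<open>r < P\<close> show ?thesis
    unfolding pow2_dist_def pow P_def [symmetric] r_def [symmetric]
    by (cases "bit n j"; cases "bit n (Suc j)") (auto simp: min_def)
qed

lemma pow2_dist_Suc:
  "pow2_dist (Suc j) (Suc n) + 2 * of_bool (bit n j) = pow2_dist (Suc j) n + 1"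
proof -
  define P :: nat where "P = 2 ^ j"
  define r where "r = n mod P"
  have "r < P" by (simp add: r_def P_def)
  have pow: "(2::nat) ^ Suc j = 2 * P" by (simp add: P_def)
  have "n mod 2 ^ Suc j = r + P * of_bool (bit n j)"
    unfolding mod_pow2_Suc [of n j] by (simp add: r_def P_def)
  with \<open>r < P\<close> show ?thesis
    unfolding pow2_dist_def mod_Suc [of n] pow
    by (cases "bit n j") (auto simp: min_def)
qed

definition bit_count :: "nat \<Rightarrow> nat \<Rightarrow> nat" where
  "bit_count n j = card {m. m < n \<and> bit m j}"

lemma bit_count_pow2_dist: "2 * bit_count n j + pow2_dist (Suc j) n = n"
proof (induction n)
  case 0
  then show ?case by (simp add: bit_count_def pow2_dist_def)
next
  case (Suc n)
  have "{m. m < Suc n \<and> bit m j} = {m. m < n \<and> bit m j} \<union> (if bit n j then {n} else {})"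
    by (auto simp: less_Suc_eq)
  then have "bit_count (Suc n) j = bit_count n j + of_bool (bit n j)"
    by (simp add: bit_count_def)
  with Suc.IH pow2_dist_Suc [of j n] show ?case by simp
qed

lemma bit_count_le: "2 * bit_count n j \<le> n"
  using bit_count_pow2_dist [of n j] by linarith

lemma bit_count_pos: "2 ^ j < n \<Longrightarrow> 0 < bit_count n j"
  unfolding bit_count_def by (subst card_gt_0_iff) (auto intro!: exI [of _ "2 ^ j"] simp: bit_exp_iff)

definition dist_jumps :: "nat \<Rightarrow> nat set" where
  "dist_jumps n = {i. 1 \<le> i \<and> pow2_dist i n < pow2_dist (Suc i) n}"

definition bit_changes :: "nat \<Rightarrow> nat set" where
  "bit_changes n = {i. 1 \<le> i \<and> bit n i \<noteq> bit n (i - 1)}"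

lemma bit_changes_0 [simp]: "bit_changes 0 = {}"
  by (simp add: bit_changes_def)

lemma Suc_mem_bit_changes: "Suc i \<in> bit_changes n \<longleftrightarrow> bit n (Suc i) \<noteq> bit n i"
  by (simp add: bit_changes_def)

lemma bit_changes_half:
  "bit_changes n = (if odd (n div 2) \<noteq> odd n then {1} else {}) \<union> Suc ` bit_changes (n div 2)"
proof (rule set_eqI)
  fix i
  show "i \<in> bit_changes n \<longleftrightarrow> i \<in> (if odd (n div 2) \<noteq> odd n then {1} else {}) \<union> Suc ` bit_changes (n div 2)"
    by (cases i; cases "i - 1")
      (auto simp: Suc_mem_bit_changes bit_Suc bit_0 bit_changes_def image_iff)
qed

lemma Suc_mem_dist_jumps:
  "Suc i \<in> dist_jumps n \<longleftrightarrow> pow2_dist (Suc i) n < pow2_dist (Suc (Suc i)) n"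
  by (simp add: dist_jumps_def)

lemma dist_jumps_double: "dist_jumps (2 * m) = (if odd m then {1} else {}) \<union> Suc ` dist_jumps m"
proof (rule set_eqI)
  fix i
  show "i \<in> dist_jumps (2 * m) \<longleftrightarrow> i \<in> (if odd m then {1} else {}) \<union> Suc ` dist_jumps m"
    by (cases i; cases "i - 1")
      (auto simp: Suc_mem_dist_jumps pow2_dist_double pow2_dist_Suc_0 dist_jumps_def image_iff odd_iff_mod_2_eq_one)
qed

lemma odd_mod_pow2_nonzero: "odd n \<Longrightarrow> n mod 2 ^ Suc j \<noteq> (0::nat)"
  by (metis dvd_mod_iff dvd_power even_zero zero_less_Suc)

lemma dist_jumps_odd: "dist_jumps (2 * m + 1) = Suc ` bit_changes m"
proof (rule set_eqI)
  fix i
  show "i \<in> dist_jumps (2 * m + 1) \<longleftrightarrow> i \<in> Suc ` bit_changes m"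
    using odd_mod_pow2_nonzero [of "2 * m + 1"] by (cases i; cases "i - 1")
      (auto simp: Suc_mem_dist_jumps pow2_dist_less_Suc_iff Suc_mem_bit_changes
        bit_Suc bit_0 dist_jumps_def bit_changes_def image_iff)
qed

lemma finite_bit_changes: "finite (bit_changes n)"
proof (induction n rule: less_induct)
  case (less n)
  show ?case
  proof (cases "n = 0")
    case False
    then have "finite (bit_changes (n div 2))" by (intro less.IH) simp
    then show ?thesis by (subst bit_changes_half) simp
  qed simp
qed

lemma card_bit_changes_half:
  "card (bit_changes n) = card (bit_changes (n div 2)) + of_bool (odd (n div 2) \<noteq> odd n)"
proof -
  have "1 \<notin> Suc ` bit_changes (n div 2)"
    by (auto simp: bit_changes_def)
  then show ?thesis
    by (subst bit_changes_half) (simp add: card_image finite_bit_changes)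
qed

lemma card_dist_jumps_odd: "card (dist_jumps (2 * m + 1)) = card (bit_changes m)"
  unfolding dist_jumps_odd by (simp add: card_image)

lemma dist_jumps_0 [simp]: "dist_jumps 0 = {}"
  by (simp add: dist_jumps_def pow2_dist_def)

lemma finite_dist_jumps: "finite (dist_jumps n)"
proof (induction n rule: less_induct)
  case (less n)
  show ?case
  proof (cases "n = 0")
    case False
    show ?thesis
    proof (cases "even n")
      case True
      then obtain m where "n = 2 * m" by blast
      with False less.IH [of m] show ?thesis
        by (simp add: dist_jumps_double)
    next
      case False
      then obtain m where "n = 2 * m + 1" by (blast elim: oddE)
      then have "dist_jumps n = Suc ` bit_changes m" by (simp only: dist_jumps_odd)
      then show ?thesis by (simp add: finite_bit_changes)
    qed
  qed simp
qed

lemma card_dist_jumps_double: "card (dist_jumps (2 * m)) = card (dist_jumps m) + of_bool (odd m)"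
proof -
  have "1 \<notin> Suc ` dist_jumps m"
    by (auto simp: dist_jumps_def)
  then show ?thesis
    by (subst dist_jumps_double) (simp add: card_image finite_dist_jumps)
qed

lemma card_image_atLeastAtMost_mono:
  fixes f :: "nat \<Rightarrow> nat"
  assumes mono: "\<And>i. f i \<le> f (Suc i)"
  shows "card (f ` {a..a + K}) = Suc (card {i. a \<le> i \<and> i < a + K \<and> f i < f (Suc i)})"
proof (induction K)
  case 0
  then show ?case by simp
next
  case (Suc K)
  have image: "f ` {a..a + Suc K} = insert (f (Suc (a + K))) (f ` {a..a + K})"
    by (auto simp: atLeastAtMostSuc_conv)
  have jumps: "{i. a \<le> i \<and> i < a + Suc K \<and> f i < f (Suc i)} =
      {i. a \<le> i \<and> i < a + K \<and> f i < f (Suc i)} \<union> (if f (a + K) < f (Suc (a + K)) then {a + K} else {})"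
    by (auto simp: less_Suc_eq)
  have below: "f i \<le> f (a + K)" if "i \<in> {a..a + K}" for i
    using lift_Suc_mono_le [of f, OF mono] that by simp
  show ?case
  proof (cases "f (a + K) < f (Suc (a + K))")
    case True
    then have "f (Suc (a + K)) \<notin> f ` {a..a + K}"
      using below by fastforce
    with True Suc.IH show ?thesis
      unfolding image jumps by simp
  next
    case False
    then have "f (Suc (a + K)) = f (a + K)"
      using mono [of "a + K"] by simp
    then have "f (Suc (a + K)) \<in> f ` {a..a + K}"
      by simp
    with False Suc.IH show ?thesis
      unfolding image jumps by (simp add: insert_absorb)
  qed
qed

lemma hc_dim_bounds:
  assumes "2 \<le> n"
  shows "1 \<le> hc_dim n" "n \<le> 2 ^ hc_dim n" "2 ^ (hc_dim n - 1) < n"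
proof -
  let ?k = "hc_dim n"
  have "0 < log 2 (real n)"
    using assms by simp
  then have k: "int ?k = \<lceil>log 2 (real n)\<rceil>" "1 \<le> ?k"
    unfolding hc_dim_def by linarith+
  show "1 \<le> ?k" by (fact k(2))
  have "real n \<le> 2 ^ ?k"
    unfolding hc_dim_def by (rule power_of_nat_log_ge) simp
  then show "n \<le> 2 ^ ?k"
    by (metis of_nat_le_iff of_nat_numeral of_nat_power)
  have "real (?k - 1) < log 2 (real n)"
    using k by linarith
  then have "2 powr real (?k - 1) < real n"
    using assms by (simp add: less_log_iff)
  then show "2 ^ (?k - 1) < n"
    by (simp add: powr_realpow flip: of_nat_less_iff)
qed

lemma bit_count_pos_hc_dim:
  assumes "2 \<le> n" and "j < hc_dim n"
  shows "0 < bit_count n j"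
proof -
  have "(2::nat) ^ j \<le> 2 ^ (hc_dim n - 1)"
    using assms(2) by (intro power_increasing) auto
  with hc_dim_bounds(3) [OF assms(1)] show ?thesis
    by (intro bit_count_pos) linarith
qed

lemma coord_eq_bit: "1 \<le> i \<Longrightarrow> i \<le> k \<Longrightarrow> coord k m i = of_bool (bit m (k - i))"
  by (simp add: coord_def beta_def nth_append bit_iff_odd mod2_eq_if del: upt_Suc)

lemma bex_atLeastAtMost_diff_iff: "(\<exists>i\<in>{1..k}. P (k - i)) \<longleftrightarrow> (\<exists>j<k. P (j::nat))"
proof
  assume "\<exists>i\<in>{1..k}. P (k - i)"
  then obtain i where "i \<in> {1..k}" "P (k - i)" by blast
  then show "\<exists>j<k. P j"
    by (intro exI [of _ "k - i"]) auto
next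
  assume "\<exists>j<k. P j"
  then obtain j where "j < k" "P j" by blast
  then show "\<exists>i\<in>{1..k}. P (k - i)"
    by (intro bexI [of _ "k - j"]) auto
qed

text \<open>Coordinate i of the hypercube is bit k - i, so the hyperplane x_i = 1/2 cuts off
  exactly the bit_count n (k - i) points having that bit set.\<close>
lemma is_hcbp_iff:
  "is_hcbp n (n0, n1) \<longleftrightarrow> n = n0 + n1 \<and> n1 \<le> n0 \<and> 1 \<le> n1 \<and>
     (\<exists>j<hc_dim n. (n - bit_count n j = n0 \<and> bit_count n j = n1) \<or>
                   (n - bit_count n j = n1 \<and> bit_count n j = n0))"
proof -
  let ?k = "hc_dim n" and ?C = "bit_count n"
  have sides: "card {m. m < n \<and> coord ?k m i < 1/2} = n - ?C (?k - i)"
    "card {m. m < n \<and> coord ?k m i > 1/2} = ?C (?k - i)" if "i \<in> {1..?k}" for i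
  proof -
    have "{m. m < n \<and> coord ?k m i > 1/2} = {m. m < n \<and> bit m (?k - i)}"
      "{m. m < n \<and> coord ?k m i < 1/2} = {..<n} - {m. m < n \<and> bit m (?k - i)}"
      using that by (auto simp: coord_eq_bit)
    then show "card {m. m < n \<and> coord ?k m i < 1/2} = n - ?C (?k - i)"
      "card {m. m < n \<and> coord ?k m i > 1/2} = ?C (?k - i)"
      by (simp_all add: bit_count_def card_Diff_subset subset_eq)
  qed
  have "is_hcbp n (n0, n1) \<longleftrightarrow> n = n0 + n1 \<and> n1 \<le> n0 \<and> 1 \<le> n1 \<and>
      (\<exists>i\<in>{1..?k}. (n - ?C (?k - i) = n0 \<and> ?C (?k - i) = n1) \<or> (n - ?C (?k - i) = n1 \<and> ?C (?k - i) = n0))"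
    unfolding is_hcbp_def Let_def prod.case by (simp only: sides cong: bex_cong)
  then show ?thesis
    by (simp only: bex_atLeastAtMost_diff_iff [where P = "\<lambda>j. (n - ?C j = n0 \<and> ?C j = n1) \<or> (n - ?C j = n1 \<and> ?C j = n0)"])
qed

lemma hcbp_set:
  assumes "2 \<le> n"
  shows "{p. is_hcbp n p} = (\<lambda>j. (n - bit_count n j, bit_count n j)) ` {..<hc_dim n}"
proof -
  let ?k = "hc_dim n" and ?C = "bit_count n"
  have "is_hcbp n (n0, n1) \<longleftrightarrow> (\<exists>j<?k. (n0, n1) = (n - ?C j, ?C j))" for n0 n1
  proof
    assume "is_hcbp n (n0, n1)"
    then obtain j where "j < ?k" "n = n0 + n1" "n1 \<le> n0"
      "(n - ?C j = n0 \<and> ?C j = n1) \<or> (n - ?C j = n1 \<and> ?C j = n0)"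
      unfolding is_hcbp_iff by blast
    with bit_count_le [of n j] show "\<exists>j<?k. (n0, n1) = (n - ?C j, ?C j)"
      by (intro exI [of _ j]) auto
  next
    assume "\<exists>j<?k. (n0, n1) = (n - ?C j, ?C j)"
    then obtain j where "j < ?k" "n0 = n - ?C j" "n1 = ?C j"
      by blast
    with bit_count_le [of n j] bit_count_pos_hc_dim [OF assms, of j] show "is_hcbp n (n0, n1)"
      unfolding is_hcbp_iff by auto
  qed
  then show ?thesis by auto
qed

lemma h_eq_card_pow2_dist_image:
  assumes "2 \<le> n"
  shows "h n = card ((\<lambda>i. pow2_dist i n) ` {1..hc_dim n})"
proof -
  let ?k = "hc_dim n" and ?C = "bit_count n"
  have "inj_on (\<lambda>x. n - 2 * x) (?C ` {..<?k})"
  proof (rule inj_onI)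
    fix x y
    assume "x \<in> ?C ` {..<?k}" "y \<in> ?C ` {..<?k}" and eq: "n - 2 * x = n - 2 * y"
    then obtain i j where "x = ?C i" "y = ?C j" by blast
    with eq bit_count_le [of n i] bit_count_le [of n j] show "x = y" by linarith
  qed
  moreover have "(\<lambda>i. pow2_dist i n) ` {1..?k} = (\<lambda>x. n - 2 * x) ` ?C ` {..<?k}"
  proof -
    have "pow2_dist (Suc j) n = n - 2 * ?C j" for j
      using bit_count_pow2_dist [of n j] by linarith
    then have "(\<lambda>i. pow2_dist i n) ` Suc ` {..<?k} = (\<lambda>x. n - 2 * x) ` ?C ` {..<?k}"
      by (simp add: image_image)
    then show ?thesis by (simp add: image_Suc_lessThan)
  qed
  moreover have "{p. is_hcbp n p} = (\<lambda>x. (n - x, x)) ` ?C ` {..<?k}"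
    using hcbp_set [OF assms] by (simp add: image_image)
  moreover have "inj (\<lambda>x. (n - x, x))"
    by (simp add: inj_def)
  ultimately show ?thesis
    using assms by (simp add: h_def card_image inj_on_subset)
qed

lemma pow2_dist_Suc_hc_dim:
  assumes "2 \<le> n" and "hc_dim n \<le> i"
  shows "pow2_dist (Suc i) n = n"
proof -
  have "(2::nat) ^ hc_dim n \<le> 2 ^ i"
    using assms(2) by (intro power_increasing) auto
  with hc_dim_bounds(2) [OF assms(1)] show ?thesis
    by (intro pow2_dist_eq_self) linarith
qed

lemma pow2_dist_less_hc_dim:
  assumes "2 \<le> n" and "i \<in> {1..hc_dim n}"
  shows "pow2_dist i n < n"
proof -
  obtain j where j: "i = Suc j" "j < hc_dim n"
    using assms(2) by (cases i) auto
  with bit_count_pos_hc_dim [OF assms(1) j(2)] bit_count_pow2_dist [of n j] show ?thesis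
    unfolding j(1) by linarith
qed

lemma h_eq_card_dist_jumps: "h n = card (dist_jumps n)"
proof (cases "2 \<le> n")
  case False
  then have "n = 0 \<or> n = 1" by auto
  with dist_jumps_odd [of 0] show ?thesis
    by (auto simp: h_def)
next
  case True
  let ?k = "hc_dim n" and ?d = "\<lambda>i. pow2_dist i n"
  have "?d ` {1..1 + ?k} = insert n (?d ` {1..?k})"
    using pow2_dist_Suc_hc_dim [OF True, of ?k] hc_dim_bounds(1) [OF True]
    by (auto simp: atLeastAtMostSuc_conv)
  moreover have "n \<notin> ?d ` {1..?k}"
    using pow2_dist_less_hc_dim [OF True] by fastforce
  moreover have "{i. 1 \<le> i \<and> i < 1 + ?k \<and> ?d i < ?d (Suc i)} = dist_jumps n"
  proof -
    have "\<not> ?d i < ?d (Suc i)" if "1 + ?k \<le> i" for i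
      using that pow2_dist_Suc_hc_dim [OF True, of i] pow2_dist_Suc_hc_dim [OF True, of "i - 1"]
      by (cases i) auto
    then show ?thesis
      unfolding dist_jumps_def by (auto simp: not_le [symmetric])
  qed
  ultimately show ?thesis
    using card_image_atLeastAtMost_mono [of ?d 1 ?k, OF pow2_dist_mono]
      h_eq_card_pow2_dist_image [OF True] by simp
qed

lemma h_double: "h (2 * m) = h m + of_bool (odd m)"
  by (simp add: h_eq_card_dist_jumps card_dist_jumps_double)

lemma h_four_mul_add_one: "h (4 * m + 1) = h (2 * m + 1) + of_bool (odd m)"
proof -
  have eq: "4 * m + 1 = 2 * (2 * m) + 1" by simp
  show ?thesis
    unfolding eq h_eq_card_dist_jumps card_dist_jumps_odd by (subst card_bit_changes_half) simp
qed

lemma h_four_mul_add_three: "h (4 * m + 3) = h (2 * m + 1) + of_bool (even m)"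
proof -
  have eq: "4 * m + 3 = 2 * (2 * m + 1) + 1" by simp
  show ?thesis
    unfolding eq h_eq_card_dist_jumps card_dist_jumps_odd by (subst card_bit_changes_half) simp
qed

theorem corollary21:
  shows "h 1 = 0 \<and> h 2 = 1 \<and> h 3 = 1 \<and> h 4 = 1 \<and> h 5 = 2 \<and> h 6 = 2 \<and> h 7 = 1 \<and> h 8 = 1 \<and>
    (\<forall>n::nat. n > 8 \<longrightarrow>
       (n mod 4 = 0 \<longrightarrow> h n = h (n div 2)) \<and>
       (n mod 4 = 2 \<longrightarrow> h n = h (n div 2) + 1) \<and>
       (n mod 8 = 1 \<longrightarrow> h n = h ((n + 1) div 2)) \<and>
       (n mod 8 = 3 \<longrightarrow> h n = h ((n - 1) div 2) + 1) \<and>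
       (n mod 8 = 5 \<longrightarrow> h n = h ((n + 1) div 2) + 1) \<and>
       (n mod 8 = 7 \<longrightarrow> h n = h ((n - 1) div 2)))"
proof -
  have h1: "h 1 = 0"
    by (simp add: h_def)
  have small: "h 2 = 1" "h 3 = 1" "h 4 = 1" "h 5 = 2" "h 6 = 2" "h 7 = 1" "h 8 = 1"
    using h1 h_double [of 1] h_double [of 2] h_double [of 3] h_double [of 4]
      h_four_mul_add_three [of 0] h_four_mul_add_one [of 1] h_four_mul_add_three [of 1]
    by simp_all
  have quotient: "\<exists>q. n = k * q + n mod k" for n k :: nat
    using mult_div_mod_eq [of k n] by metis
  show ?thesis
  proof (intro conjI h1 small allI impI)
    fix n :: nat
    assume "n mod 4 = 0"
    with quotient [of n 4] obtain q where "n = 2 * (2 * q)"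
      by auto
    then show "h n = h (n div 2)"
      using h_double [of "2 * q"] by simp
  next
    fix n :: nat
    assume "n mod 4 = 2"
    with quotient [of n 4] obtain q where "n = 2 * (2 * q + 1)"
      by auto
    then show "h n = h (n div 2) + 1"
      using h_double [of "2 * q + 1"] by simp
  next
    fix n :: nat
    assume "n mod 8 = 1"
    with quotient [of n 8] obtain q where "n = 4 * (2 * q) + 1"
      by auto
    then show "h n = h ((n + 1) div 2)"
      using h_four_mul_add_one [of "2 * q"] by simp
  next
    fix n :: nat
    assume "n mod 8 = 3"
    with quotient [of n 8] obtain q where "n = 4 * (2 * q) + 3"
      by auto
    then show "h n = h ((n - 1) div 2) + 1"
      using h_four_mul_add_three [of "2 * q"] by simp
  next
    fix n :: nat
    assume "n mod 8 = 5"
    with quotient [of n 8] obtain q where "n = 4 * (2 * q + 1) + 1"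
      by auto
    then show "h n = h ((n + 1) div 2) + 1"
      using h_four_mul_add_one [of "2 * q + 1"] by (simp add: numeral_3_eq_3)
  next
    fix n :: nat
    assume "n mod 8 = 7"
    with quotient [of n 8] obtain q where "n = 4 * (2 * q + 1) + 3"
      by auto
    then show "h n = h ((n - 1) div 2)"
      using h_four_mul_add_three [of "2 * q + 1"] by (simp add: numeral_3_eq_3)
  qed
qed

end
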